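(* Let $b_1,\dots,b_n$ be nonnegative integers, let $i$ be an index with $b_i\ge1$, and put $[\mathbf b-\varepsilon_i]=[b_1,\dots,b_{i-1},b_i-1,b_{i+1},\dots,b_n]$ and $d=b_1+\dots+b_n+1$. Write the Hilbert–Poincaré series of $R_{[\mathbf b-\varepsilon_i]}$ as $$P_{R_{[\mathbf b-\varepsilon_i]}}(t)=\frac{h_0([\mathbf b-\varepsilon_i])+h_1([\mathbf b-\varepsilon_i])t+\dots+h_r([\mathbf b-\varepsilon_i])t^r}{(1-t)^{d-1}}$$ with $h_r([\mathbf b-\varepsilon_i])\ne0$. Then $$P_{R_{[\mathbf b]}}(t)=\frac{h_0([\mathbf b])+h_1([\mathbf b])t+\dots+h_r([\mathbf b])t^r+h_{r+1}([\mathbf b])t^{r+1}}{(1-t)^{d}},$$ where $h_0([\mathbf b])=1$, for $k=1,\dots,r$ $$h_k([\mathbf b])=\frac{(d-1-b_i-(k-1))\,h_{k-1}([\mathbf b-\varepsilon_i])+(b_i+k)\,h_k([\mathbf b-\varepsilon_i])}{b_i},$$ and $h_{r+1}([\mathbf b])=\frac{(d-1-b_i-r)\,h_r([\mathbf b-\varepsilon_i])}{b_i}$ (which may be zero). If $h_{r+1}([\mathbf b])=0$, then $h_r([\mathbf b])=\frac{h_{r-1}([\mathbf b-\varepsilon_i])+(b_i+r)h_r([\mathbf b-\varepsilon_i])}{b_i}>0$.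
   Context: Let $K$ be a field and $b_1,\dots,b_n$ nonnegative integers; write $[\mathbf b]=[b_1,\dots,b_n]$. Let $\mathcal M=\{0,\dots,b_1\}\times\dots\times\{0,\dots,b_n\}\subset\mathbb N^n$, $S=K[T_v\mid v\in\mathcal M]$ with all $T_v$ of degree 1, and let $\mathcal J_{[\mathbf b]}$ be the kernel of the ring homomorphism $S\to K[x_{j,l}\mid 1\le j\le n,\,0\le l\le b_j]$, $T_v\mapsto x_{1,v_1}x_{2,v_2}\cdots x_{n,v_n}$ (the ideal of the Segre embedding of $\mathbb P^{b_1}\times\dots\times\mathbb P^{b_n}$). Set $R_{[\mathbf b]}=S/\mathcal J_{[\mathbf b]}$. Its Hilbert function is $H_{R_{[\mathbf b]}}(l)=\prod_{j=1}^n\binom{b_j+l}{b_j}$, its Krull dimension is $b_1+\dots+b_n+1$, and its Hilbert–Poincaré series is $P_{R_{[\mathbf b]}}(t)=\sum_{l\ge0}H_{R_{[\mathbf b]}}(l)t^l$. *)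

theory Defs
  imports "HOL-Computational_Algebra.Formal_Power_Series"
begin

definition segre_hilbert_fun :: "nat list \<Rightarrow> nat \<Rightarrow> nat" where
  "segre_hilbert_fun b l = (\<Prod>j<length b. (b ! j + l) choose (b ! j))"

definition segre_hp_series :: "nat list \<Rightarrow> rat fps" where
  "segre_hp_series b = Abs_fps (\<lambda>l. of_nat (segre_hilbert_fun b l))"

end

theory Submission
  imports Defs
begin

text \<open>Since \<open>(b\<^sub>i + l) \<cdot> binom(b\<^sub>i - 1 + l, b\<^sub>i - 1) = b\<^sub>i \<cdot> binom(b\<^sub>i + l, b\<^sub>i)\<close>, the Hilbert
  functions satisfy \<open>b\<^sub>i H\<^sub>[b](l) = (b\<^sub>i + l) H\<^sub>[b-\<epsilon>\<^sub>i](l)\<close>, i.e.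
  \<open>b\<^sub>i P\<^sub>[b] = b\<^sub>i P\<^sub>[b-\<epsilon>\<^sub>i] + t P\<^sub>[b-\<epsilon>\<^sub>i]'\<close>. Multiplying by \<open>(1 - t)\<^sup>d\<close> and comparing
  coefficients expresses the numerator of \<open>P\<^sub>[b]\<close> through that of \<open>P\<^sub>[b-\<epsilon>\<^sub>i]\<close>. Positivity of
  \<open>h\<^sub>r([b])\<close> in the degenerate case needs \<open>h\<^sub>r\<^sub>-\<^sub>1([b-\<epsilon>\<^sub>i]) \<ge> 0\<close>: the numerators of all
  Segre rings are nonnegative, by induction on \<open>|b|\<close> along the same recursion.\<close>

lemma fps_deriv_power_times_self:
  fixes Y :: "'a::comm_ring_1 fps"
  assumes "fps_deriv Y = -1"
  shows "fps_deriv (Y ^ n) * Y = - of_nat n * Y ^ n"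
proof (induction n)
  case (Suc n)
  have "fps_deriv (Y ^ Suc n) * Y = Y * (fps_deriv (Y ^ n) * Y) - Y ^ Suc n"
    using assms by (simp add: algebra_simps)
  also have "\<dots> = - of_nat (Suc n) * Y ^ Suc n"
    unfolding Suc.IH by (simp add: algebra_simps)
  finally show ?case .
qed simp

lemma fps_deriv_times_one_minus_X_power:
  fixes P :: "'a::comm_ring_1 fps"
  shows "fps_deriv P * (1 - fps_X) ^ Suc n
       = fps_deriv (P * (1 - fps_X) ^ n) * (1 - fps_X) + of_nat n * (P * (1 - fps_X) ^ n)"
proof -
  define Y :: "'a fps" where "Y = 1 - fps_X"
  have dY: "fps_deriv Y = -1"
    unfolding Y_def by simp
  have "fps_deriv (P * Y ^ n) * Y = fps_deriv P * Y ^ Suc n + P * (fps_deriv (Y ^ n) * Y)"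
    by (simp add: algebra_simps)
  also have "\<dots> = fps_deriv P * Y ^ Suc n - of_nat n * (P * Y ^ n)"
    unfolding fps_deriv_power_times_self[OF dY]
    by (simp add: algebra_simps)
  finally show ?thesis unfolding Y_def by (simp add: algebra_simps)
qed

lemma fps_nth_times_one_minus_X:
  fixes f :: "'a::comm_ring_1 fps"
  shows "fps_nth (f * (1 - fps_X)) (Suc m) = fps_nth f (Suc m) - fps_nth f m"
  by (simp add: algebra_simps)

lemma fps_nth_polynomial:
  fixes g :: "nat \<Rightarrow> 'a::comm_ring_1"
  shows "fps_nth (\<Sum>k\<le>r. fps_const (g k) * fps_X ^ k) n = (if n \<le> r then g n else 0)"
  by (simp add: fps_sum_nth if_distrib[of "(*) _"] cong: if_cong)

lemma sum_list_decrement: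
  assumes "i < length b" and "1 \<le> b ! i"
  shows "sum_list b = Suc (sum_list (b[i := b ! i - 1]))"
  using assms sum_list_update[of i b] elem_le_sum_list[of i b] by simp

lemma segre_hilbert_fun_decrement:
  assumes i: "i < length b" and bi: "1 \<le> b ! i"
  shows "b ! i * segre_hilbert_fun b l = (b ! i + l) * segre_hilbert_fun (b[i := b ! i - 1]) l"
proof -
  let ?b' = "b[i := b ! i - 1]"
  let ?F = "\<lambda>c j. (c ! j + l) choose (c ! j)"
  have split: "segre_hilbert_fun c l = ?F c i * (\<Prod>j\<in>{..<length b} - {i}. ?F c j)"
    if "length c = length b" for c
    unfolding segre_hilbert_fun_def that using i by (simp add: prod.remove)
  have others: "(\<Prod>j\<in>{..<length b} - {i}. ?F b j) = (\<Prod>j\<in>{..<length b} - {i}. ?F ?b' j)"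
    by (rule prod.cong) auto
  obtain k where k: "b ! i = Suc k"
    using bi by (cases "b ! i") auto
  have "b ! i * ?F b i = (b ! i + l) * ?F ?b' i"
    using i k binomial_absorption[of k "Suc k + l"] by simp
  then show ?thesis
    unfolding split[OF refl] split[OF length_list_update] others by (simp only: mult.assoc[symmetric])
qed

lemma segre_hp_series_decrement:
  assumes i: "i < length b" and bi: "1 \<le> b ! i"
  shows "fps_const (of_nat (b ! i)) * segre_hp_series b
       = fps_const (of_nat (b ! i)) * segre_hp_series (b[i := b ! i - 1])
         + fps_X * fps_deriv (segre_hp_series (b[i := b ! i - 1]))"
proof (rule fps_ext)
  fix n
  have "of_nat (b ! i) * (of_nat (segre_hilbert_fun b n) :: rat)
      = (of_nat (b ! i) + of_nat n) * of_nat (segre_hilbert_fun (b[i := b ! i - 1]) n)"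
    using arg_cong[OF segre_hilbert_fun_decrement[OF i bi, of n], of "of_nat :: nat \<Rightarrow> rat"]
    by simp
  then show "fps_nth (fps_const (of_nat (b ! i)) * segre_hp_series b) n
    = fps_nth (fps_const (of_nat (b ! i)) * segre_hp_series (b[i := b ! i - 1])
               + fps_X * fps_deriv (segre_hp_series (b[i := b ! i - 1]))) n"
    by (cases n) (auto simp: segre_hp_series_def algebra_simps)
qed

definition segre_h_vector :: "nat list \<Rightarrow> nat \<Rightarrow> rat" where
  "segre_h_vector b k = fps_nth (segre_hp_series b * (1 - fps_X) ^ (sum_list b + 1)) k"

lemma segre_h_vector_0: "segre_h_vector b 0 = 1"
  by (simp add: segre_h_vector_def segre_hp_series_def segre_hilbert_fun_def fps_power_zeroth)

lemma segre_h_vector_Suc: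
  assumes i: "i < length b" and bi: "1 \<le> b ! i"
  shows "segre_h_vector b (Suc m)
     = ((of_nat (sum_list b) - of_nat (b ! i) - of_nat m) * segre_h_vector (b[i := b ! i - 1]) m
        + (of_nat (b ! i) + of_nat (Suc m)) * segre_h_vector (b[i := b ! i - 1]) (Suc m))
       / of_nat (b ! i)"
proof -
  let ?B = "of_nat (b ! i) :: rat" and ?P = "segre_hp_series (b[i := b ! i - 1])"
  define n where "n = sum_list b"
  define Q where "Q = ?P * (1 - fps_X) ^ n"
  have q: "segre_h_vector (b[i := b ! i - 1]) k = fps_nth Q k" for k
    unfolding segre_h_vector_def Q_def n_def sum_list_decrement[OF i bi] by simp
  have "fps_const ?B * (segre_hp_series b * (1 - fps_X) ^ Suc n)
      = (fps_const ?B * ?P + fps_X * fps_deriv ?P) * (1 - fps_X) ^ Suc n"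
    unfolding mult.assoc[symmetric] segre_hp_series_decrement[OF i bi] ..
  also have "\<dots> = fps_const ?B * (Q * (1 - fps_X)) + fps_X * (fps_deriv ?P * (1 - fps_X) ^ Suc n)"
    unfolding Q_def by (simp add: algebra_simps)
  finally have e: "fps_const ?B * (segre_hp_series b * (1 - fps_X) ^ Suc n)
      = fps_const ?B * (Q * (1 - fps_X))
        + fps_X * (fps_deriv Q * (1 - fps_X) + fps_const (of_nat n) * Q)"
    unfolding fps_deriv_times_one_minus_X_power Q_def fps_of_nat .
  have "?B * segre_h_vector b (Suc m)
      = fps_nth (fps_const ?B * (segre_hp_series b * (1 - fps_X) ^ Suc n)) (Suc m)"
    by (simp add: segre_h_vector_def n_def)
  also have "\<dots> = ?B * fps_nth (Q * (1 - fps_X)) (Suc m)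
      + fps_nth (fps_deriv Q * (1 - fps_X)) m + of_nat n * fps_nth Q m"
    unfolding e by simp
  also have "\<dots> = (of_nat n - ?B - of_nat m) * fps_nth Q m + (?B + of_nat (Suc m)) * fps_nth Q (Suc m)"
    by (cases m) (simp_all add: algebra_simps fps_nth_times_one_minus_X)
  finally show ?thesis
    using bi unfolding q n_def by (simp add: field_simps)
qed

lemma segre_h_vector_of_zeros:
  assumes "sum_list b = 0"
  shows "segre_h_vector b k = (if k = 0 then 1 else 0)"
proof (cases k)
  case (Suc m)
  have "b ! j = 0" if "j < length b" for j
    using assms elem_le_sum_list[OF that] by linarith
  then have "segre_hilbert_fun b l = 1" for l
    unfolding segre_hilbert_fun_def by (intro prod.neutral) simp
  then have "segre_h_vector b k = fps_nth (Abs_fps (\<lambda>_. 1) * (1 - fps_X)) (Suc m)"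
    unfolding segre_h_vector_def segre_hp_series_def assms Suc by simp
  then show ?thesis
    unfolding fps_nth_times_one_minus_X Suc by simp
qed (simp add: segre_h_vector_0)

text \<open>The degree bound \<open>h\<^sub>k = 0\<close> for \<open>k > |b| - b\<^sub>j\<close> is what makes the possibly negative
  coefficient \<open>|b| - b\<^sub>i - m\<close> of the recursion harmless.\<close>

lemma segre_h_vector_nonneg_and_vanishing:
  "0 \<le> segre_h_vector b k \<and> (\<forall>j<length b. sum_list b < k + b ! j \<longrightarrow> segre_h_vector b k = 0)"
proof (induction "sum_list b" arbitrary: b k)
  case 0
  then show ?case
    using elem_le_sum_list[of _ b] by (fastforce simp: segre_h_vector_of_zeros)
next
  case (Suc N)
  then obtain i where i: "i < length b" and "b ! i \<noteq> 0"
    by (metis in_set_conv_nth sum_list_eq_0_iff nat.distinct(1))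
  then have bi: "1 \<le> b ! i"
    by simp
  let ?b' = "b[i := b ! i - 1]" and ?B = "b ! i" and ?h' = "segre_h_vector (b[i := b ! i - 1])"
  have n: "sum_list b = Suc (sum_list ?b')"
    by (rule sum_list_decrement[OF i bi])
  have IH: "0 \<le> ?h' k \<and> (\<forall>j<length b. sum_list ?b' < k + ?b' ! j \<longrightarrow> ?h' k = 0)" for k
    using Suc.hyps(1)[of ?b' k] Suc.hyps(2) n by simp
  have b'_nth: "?b' ! j = (if j = i then ?B - 1 else b ! j)" if "j < length b" for j
    using that by simp
  show ?case
  proof (cases k)
    case 0
    then show ?thesis
      using elem_le_sum_list[of _ b] by (auto simp: segre_h_vector_0 not_less)
  next
    case (Suc m)
    let ?c = "of_nat (sum_list b) - of_nat ?B - of_nat m :: rat"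
    have h: "segre_h_vector b k = (?c * ?h' m + (of_nat ?B + of_nat k) * ?h' k) / of_nat ?B"
      unfolding Suc by (rule segre_h_vector_Suc[OF i bi])
    have "0 \<le> ?c * ?h' m"
    proof (cases "?h' m = 0")
      case False
      then have "m + ?B \<le> sum_list b"
        using IH[of m] i b'_nth[OF i] bi n by fastforce
      then show ?thesis
        using IH[of m] by (simp add: of_nat_add[symmetric] del: of_nat_add)
    qed simp
    then have nonneg: "0 \<le> segre_h_vector b k"
      unfolding h using IH[of k] by simp
    have "?c * ?h' m = 0 \<and> ?h' k = 0" if j: "j < length b" and lt: "sum_list b < k + b ! j" for j
      using IH[of m] IH[of k] j lt b'_nth[OF j] n Suc
      by (cases "j = i"; cases "sum_list b = m + ?B") auto
    then show ?thesis
      using nonneg unfolding h by auto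
  qed
qed

theorem mainTheorem4:
  fixes b :: "nat list" and i :: nat and h :: "nat \<Rightarrow> rat" and r :: nat
  assumes i: "i < length b"
    and bi: "b ! i \<ge> 1"
    and hr: "h r \<noteq> 0"
    and hser: "segre_hp_series (b[i := b ! i - 1]) * (1 - fps_X) ^ (sum_list b)
               = (\<Sum>k\<le>r. fps_const (h k) * fps_X ^ k)"
  shows
    "let d = sum_list b + 1;
         bi = b ! i;
         c = (\<lambda>k. if k = 0 then 1
                   else ((of_nat d - 1 - of_nat bi - (of_nat k - 1)) * h (k - 1)
                         + (of_nat bi + of_nat k) * (if k \<le> r then h k else 0)) / of_nat bi)
     in segre_hp_series b * (1 - fps_X) ^ d = (\<Sum>k\<le>r+1. fps_const (c k) * fps_X ^ k)
        \<and> c 0 = 1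
        \<and> (\<forall>k. 1 \<le> k \<and> k \<le> r \<longrightarrow>
              c k = ((of_nat d - 1 - of_nat bi - (of_nat k - 1)) * h (k - 1)
                     + (of_nat bi + of_nat k) * h k) / of_nat bi)
        \<and> c (r + 1) = (of_nat d - 1 - of_nat bi - of_nat r) * h r / of_nat bi
        \<and> (c (r + 1) = 0 \<longrightarrow>
              c r > 0 \<and>
              (r \<ge> 1 \<longrightarrow> c r = (h (r - 1) + (of_nat bi + of_nat r) * h r) / of_nat bi))"
proof -
  let ?h' = "segre_h_vector (b[i := b ! i - 1])" and ?B = "of_nat (b ! i) :: rat"
  define c where "c k = (if k = 0 then 1
      else ((of_nat (sum_list b + 1) - 1 - ?B - (of_nat k - 1)) * h (k - 1)
            + (?B + of_nat k) * (if k \<le> r then h k else 0)) / ?B)" for k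
  have h': "?h' k = (if k \<le> r then h k else 0)" for k
    using arg_cong[OF hser, of "\<lambda>f. fps_nth f k"] sum_list_decrement[OF i bi]
    by (simp add: segre_h_vector_def fps_nth_polynomial)
  have h_b: "segre_h_vector b k = (if k \<le> r + 1 then c k else 0)" for k
    using h' segre_h_vector_Suc[OF i bi] segre_h_vector_0 by (cases k) (auto simp: c_def)
  have series: "segre_hp_series b * (1 - fps_X) ^ (sum_list b + 1)
      = (\<Sum>k\<le>r+1. fps_const (c k) * fps_X ^ k)"
    by (rule fps_ext) (unfold fps_nth_polynomial segre_h_vector_def[symmetric], rule h_b)
  have h_nonneg: "0 \<le> h k" if "k \<le> r" for k
    using segre_h_vector_nonneg_and_vanishing[of "b[i := b ! i - 1]" k] h' that by simp
  have sum_b: "of_nat (sum_list b) = ?B + of_nat r" if "c (r + 1) = 0"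
    using that hr bi by (simp add: c_def)
  have c_r: "c r = (h (r - 1) + (?B + of_nat r) * h r) / ?B" if "c (r + 1) = 0" and "1 \<le> r"
    using sum_b[OF that(1)] that(2) by (simp add: c_def algebra_simps of_nat_diff)
  have "c r > 0" if "c (r + 1) = 0"
    using c_r[OF that] hr h_nonneg[of r] h_nonneg[of "r - 1"] bi
    by (cases r) (auto simp: c_def add_nonneg_pos)
  with series c_r show ?thesis
    unfolding Let_def by (intro conjI allI impI) (simp_all add: c_def)
qed

end
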